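(* Let $d$ be a positive integer and let $p,\beta\in(0,1]$. A.a.s. as $n\to\infty$, the diameter of the PageRank-based selection Webgraph model with $n$ vertices and parameters $d,p,\beta$ is at most $8e^p(\log n)/p$.
   Context: The PageRank of a finite directed multigraph (every vertex having positive out-degree) with parameter $p$ is the stationary distribution of the following random walk: it starts at a uniformly random vertex; at each step, with probability $p$ it jumps to a uniformly random vertex, and with probability $1-p$ it moves along a uniformly random out-edge (counted with multiplicity) of the current vertex. The PageRank-based selection Webgraph model is the random $n$-vertex directed multigraph, all vertices of out-degree $d$, generated as follows: start with a single vertex with $d$ self-loops; at each subsequent step a new vertex appears and creates $d$ edges to old vertices (repetitions allowed), the heads being chosen independently, each being a uniformly random existing vertex with probability $\beta$ and a vertex chosen according to the PageRank distribution (with parameter $p$) of the current graph with probability $1-\beta$. The diameter of a directed graph is the diameter of its underlying undirected graph. A.a.s. means with probability tending to $1$ as $n\to\infty$; $\log$ is natural. *)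

theory Defs
  imports "HOL-Probability.Probability" "HOL-Library.Extended_Nat"
begin

text \<open>A directed multigraph on vertex set {0..<length G}: G ! v is the list of heads of
  the out-edges of vertex v (counted with multiplicity).\<close>
type_synonym mgraph = "nat list list"

definition pr_step :: "real \<Rightarrow> mgraph \<Rightarrow> nat \<Rightarrow> nat pmf" where
  "pr_step p G v = bind_pmf (bernoulli_pmf p)
     (\<lambda>b. if b then pmf_of_set {..<length G} else pmf_of_multiset (mset (G ! v)))"

text \<open>PageRank: the stationary distribution of this walk (unique for p > 0).\<close>
definition pagerank :: "real \<Rightarrow> mgraph \<Rightarrow> nat pmf" where
  "pagerank p G = (THE \<mu>. set_pmf \<mu> \<subseteq> {..<length G} \<and> bind_pmf \<mu> (pr_step p G) = \<mu>)"

definition head_dist :: "real \<Rightarrow> real \<Rightarrow> mgraph \<Rightarrow> nat pmf" where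
  "head_dist p \<beta> G = bind_pmf (bernoulli_pmf \<beta>)
     (\<lambda>b. if b then pmf_of_set {..<length G} else pagerank p G)"

text \<open>webgraph d p beta k: the random graph after k steps, i.e. with k+1 vertices.\<close>
primrec webgraph :: "nat \<Rightarrow> real \<Rightarrow> real \<Rightarrow> nat \<Rightarrow> mgraph pmf" where
  "webgraph d p \<beta> 0 = return_pmf [replicate d 0]"
| "webgraph d p \<beta> (Suc k) = bind_pmf (webgraph d p \<beta> k)
     (\<lambda>G. map_pmf (\<lambda>hs. G @ [hs]) (replicate_pmf d (head_dist p \<beta> G)))"

text \<open>The n-vertex PageRank-based selection Webgraph model (n \<ge> 1).\<close>
definition webgraph_model :: "nat \<Rightarrow> real \<Rightarrow> real \<Rightarrow> nat \<Rightarrow> mgraph pmf" where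
  "webgraph_model d p \<beta> n = webgraph d p \<beta> (n - 1)"

text \<open>Underlying undirected graph, distances and diameter (\<infinity> if disconnected).\<close>
definition und_edges :: "mgraph \<Rightarrow> (nat \<times> nat) set" where
  "und_edges G = {(u, v). u < length G \<and> v < length G \<and> (v \<in> set (G ! u) \<or> u \<in> set (G ! v))}"

definition und_dist :: "mgraph \<Rightarrow> nat \<Rightarrow> nat \<Rightarrow> enat" where
  "und_dist G u v = (INF k \<in> {k. (u, v) \<in> und_edges G ^^ k}. enat k)"

definition diameter :: "mgraph \<Rightarrow> enat" where
  "diameter G = (SUP (u, v) \<in> {..<length G} \<times> {..<length G}. und_dist G u v)"

end

theory Submission
  imports Defs
begin

text \<open>Fix \<open>s > 1\<close> with \<open>(1 - p) s < 1\<close>. If \<open>f\<close> grows by at most the factor \<open>s\<close> along every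
  edge, stationarity of PageRank gives \<open>E\<^sub>\<pi> f \<le> p / (1 - (1 - p) s) \<cdot> avg f\<close>. Applied to
  \<open>f v = s ^ dist(v, 0)\<close>, and using that a new vertex is adjacent to its first head, this
  shows that the root potential \<open>\<Phi> = \<Sigma>\<^sub>v s ^ dist(v, 0)\<close> satisfies
  \<open>E \<Phi>\<^sub>k\<^sub>+\<^sub>1 \<le> (1 + c / (k + 1)) E \<Phi>\<^sub>k\<close> with \<open>c = s p / (1 - (1 - p) s)\<close>, hence
  \<open>E \<Phi>\<^sub>n = O(n powr c)\<close>. By Markov's inequality, all distances to vertex 0 are at most
  \<open>K ln n\<close> except with probability \<open>O(n powr (c - K ln s))\<close>. For \<open>s = 1 + p / 2\<close> and
  \<open>K = 4 e\<^sup>p / p\<close> one has \<open>c < K ln s\<close>, and the diameter is at most twice the largest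
  distance to vertex 0.\<close>

lemma expectation_bind_pmf_finite:
  fixes f :: "'b \<Rightarrow> real"
  assumes "finite (set_pmf M)" and "\<And>x. x \<in> set_pmf M \<Longrightarrow> finite (set_pmf (N x))"
  shows "measure_pmf.expectation (bind_pmf M N) f
       = measure_pmf.expectation M (\<lambda>x. measure_pmf.expectation (N x) f)"
  using assms by (subst pmf_expectation_bind[of "set_pmf M"]) (simp_all add: integral_measure_pmf[of "set_pmf M"])

section \<open>PageRank as a stationary distribution\<close>

definition mgraph_wf :: "mgraph \<Rightarrow> bool" where
  "mgraph_wf G \<longleftrightarrow> G \<noteq> [] \<and> (\<forall>v<length G. G ! v \<noteq> [] \<and> set (G ! v) \<subseteq> {..<length G})"

definition edge_step :: "mgraph \<Rightarrow> nat \<Rightarrow> nat pmf" where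
  "edge_step G v = pmf_of_multiset (mset (G ! v))"

primrec edge_walk :: "mgraph \<Rightarrow> nat \<Rightarrow> nat pmf" where
  "edge_walk G 0 = pmf_of_set {..<length G}"
| "edge_walk G (Suc j) = bind_pmf (edge_walk G j) (edge_step G)"

lemma set_pmf_edge_step: "G ! v \<noteq> [] \<Longrightarrow> set_pmf (edge_step G v) = set (G ! v)"
  by (simp add: edge_step_def)

lemma set_pmf_uniform_vertex: "mgraph_wf G \<Longrightarrow> set_pmf (pmf_of_set {..<length G}) = {..<length G}"
  by (intro set_pmf_of_set) (auto simp: mgraph_wf_def)

lemma set_pmf_edge_walk: "mgraph_wf G \<Longrightarrow> set_pmf (edge_walk G j) \<subseteq> {..<length G}"
proof (induction j)
  case (Suc j)
  have "set_pmf (edge_step G v) \<subseteq> {..<length G}" if "v < length G" for v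
    using that \<open>mgraph_wf G\<close> by (auto simp: set_pmf_edge_step mgraph_wf_def)
  with Suc show ?case by auto
qed (simp add: set_pmf_uniform_vertex)

lemma pr_step_eq: "pr_step p G v = bind_pmf (bernoulli_pmf p)
    (\<lambda>b. if b then pmf_of_set {..<length G} else edge_step G v)"
  by (simp add: pr_step_def edge_step_def cong: if_cong)

text \<open>The stationary distribution exists explicitly: it is the position of the edge walk,
  started uniformly, after a geometrically distributed number of steps.\<close>
lemma stationary_geometric_edge_walk:
  fixes G :: mgraph
  assumes "0 < p" "p \<le> 1"
  defines "\<mu> \<equiv> bind_pmf (geometric_pmf p) (edge_walk G)"
  shows "bind_pmf \<mu> (pr_step p G) = \<mu>"
proof -
  have "bind_pmf \<mu> (pr_step p G)
      = bind_pmf (bernoulli_pmf p) (\<lambda>b. if b then edge_walk G 0 else bind_pmf \<mu> (edge_step G))"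
    unfolding pr_step_eq by (subst bind_commute_pmf) (auto intro: bind_pmf_cong)
  also have "bind_pmf \<mu> (edge_step G) = bind_pmf (map_pmf Suc (geometric_pmf p)) (edge_walk G)"
    by (simp add: \<mu>_def bind_assoc_pmf bind_map_pmf)
  also have "bind_pmf (bernoulli_pmf p)
      (\<lambda>b. if b then edge_walk G 0 else bind_pmf (map_pmf Suc (geometric_pmf p)) (edge_walk G))
    = bind_pmf (bind_pmf (bernoulli_pmf p)
        (\<lambda>b. if b then return_pmf 0 else map_pmf Suc (geometric_pmf p))) (edge_walk G)"
    by (simp add: bind_assoc_pmf) (intro bind_pmf_cong, auto simp: bind_return_pmf)
  also have "\<dots> = \<mu>"
    unfolding \<mu>_def by (subst (2) geometric_bind_pmf_unfold) (use assms in auto)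
  finally show ?thesis .
qed

lemma pmf_pr_step:
  assumes "0 \<le> p" "p \<le> 1"
  shows "pmf (pr_step p G v) w = p * pmf (pmf_of_set {..<length G}) w + (1 - p) * pmf (edge_step G v) w"
  unfolding pr_step_eq pmf_bind using assms by simp

lemma pmf_bind_pr_step:
  assumes "0 \<le> p" "p \<le> 1" and "set_pmf \<mu> \<subseteq> {..<length G}"
  shows "pmf (bind_pmf \<mu> (pr_step p G)) w
       = p * pmf (pmf_of_set {..<length G}) w + (1 - p) * (\<Sum>v<length G. pmf \<mu> v * pmf (edge_step G v) w)"
proof -
  have "pmf (bind_pmf \<mu> (pr_step p G)) w = (\<Sum>v<length G. pmf \<mu> v * pmf (pr_step p G v) w)"
    unfolding pmf_bind using assms(3)
    by (subst integral_measure_pmf_real[of "{..<length G}"]) (auto simp: mult.commute)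
  also have "\<dots> = (\<Sum>v<length G. pmf \<mu> v) * (p * pmf (pmf_of_set {..<length G}) w)
      + (1 - p) * (\<Sum>v<length G. pmf \<mu> v * pmf (edge_step G v) w)"
    unfolding pmf_pr_step[OF assms(1,2)] distrib_left sum.distrib sum_distrib_left sum_distrib_right
    by (simp add: ac_simps)
  also have "(\<Sum>v<length G. pmf \<mu> v) = 1"
    using assms(3) by (intro sum_pmf_eq_1) auto
  finally show ?thesis by simp
qed

text \<open>Uniqueness: the difference of two stationary distributions is contracted by the
  factor \<open>1 - p\<close> in \<open>\<ell>\<^sub>1\<close>, because the jump part cancels.\<close>
lemma stationary_pr_step_unique:
  assumes p: "0 < p" "p \<le> 1" and G: "mgraph_wf G"
    and \<mu>: "set_pmf \<mu> \<subseteq> {..<length G}" "bind_pmf \<mu> (pr_step p G) = \<mu>"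
    and \<nu>: "set_pmf \<nu> \<subseteq> {..<length G}" "bind_pmf \<nu> (pr_step p G) = \<nu>"
  shows "\<mu> = \<nu>"
proof -
  define V where "V = {..<length G}"
  define g where "g w = pmf \<mu> w - pmf \<nu> w" for w
  have g_eq: "g w = (1 - p) * (\<Sum>v\<in>V. g v * pmf (edge_step G v) w)" for w
  proof -
    have "(\<Sum>v\<in>V. g v * pmf (edge_step G v) w)
        = (\<Sum>v\<in>V. pmf \<mu> v * pmf (edge_step G v) w) - (\<Sum>v\<in>V. pmf \<nu> v * pmf (edge_step G v) w)"
      by (simp add: g_def left_diff_distrib sum_subtractf)
    then show ?thesis
      using pmf_bind_pr_step[OF _ p(2) \<mu>(1), of w] pmf_bind_pr_step[OF _ p(2) \<nu>(1), of w] p \<mu>(2) \<nu>(2)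
      by (simp add: g_def V_def right_diff_distrib)
  qed
  have edge_step_sum: "(\<Sum>w\<in>V. pmf (edge_step G v) w) = 1" if "v \<in> V" for v
    using G that by (intro sum_pmf_eq_1) (auto simp: V_def set_pmf_edge_step mgraph_wf_def)
  have "(\<Sum>w\<in>V. \<bar>g w\<bar>) = (\<Sum>w\<in>V. (1 - p) * \<bar>\<Sum>v\<in>V. g v * pmf (edge_step G v) w\<bar>)"
    using p by (subst g_eq) (simp add: abs_mult)
  also have "\<dots> \<le> (\<Sum>w\<in>V. (1 - p) * (\<Sum>v\<in>V. \<bar>g v\<bar> * pmf (edge_step G v) w))"
    using p by (intro sum_mono mult_left_mono order.trans[OF sum_abs]) (auto simp: abs_mult)
  also have "\<dots> = (1 - p) * (\<Sum>v\<in>V. \<bar>g v\<bar> * (\<Sum>w\<in>V. pmf (edge_step G v) w))"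
    by (simp only: sum_distrib_left[symmetric] sum.swap[of _ V V])
  also have "\<dots> = (1 - p) * (\<Sum>v\<in>V. \<bar>g v\<bar>)"
    using edge_step_sum by simp
  finally have "(\<Sum>w\<in>V. \<bar>g w\<bar>) \<le> 0"
    using p by (simp add: algebra_simps mult_le_0_iff)
  then have "(\<Sum>w\<in>V. \<bar>g w\<bar>) = 0"
    by (intro order_antisym sum_nonneg) auto
  then have "\<forall>w\<in>V. g w = 0"
    by (subst (asm) sum_nonneg_eq_0_iff) (auto simp: V_def)
  have "pmf \<mu> w = pmf \<nu> w" for w
  proof (cases "w \<in> V")
    case False
    then show ?thesis
      using \<mu>(1) \<nu>(1) by (metis V_def pmf_eq_0_set_pmf subsetD)
  qed (use \<open>\<forall>w\<in>V. g w = 0\<close> in \<open>simp add: g_def\<close>)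
  then show ?thesis by (rule pmf_eqI)
qed

lemma pagerank_stationary:
  assumes "0 < p" "p \<le> 1" and "mgraph_wf G"
  shows set_pmf_pagerank: "set_pmf (pagerank p G) \<subseteq> {..<length G}"
    and bind_pagerank_pr_step: "bind_pmf (pagerank p G) (pr_step p G) = pagerank p G"
proof -
  define stationary where
    "stationary \<mu> \<longleftrightarrow> set_pmf \<mu> \<subseteq> {..<length G} \<and> bind_pmf \<mu> (pr_step p G) = \<mu>" for \<mu>
  define \<mu> where "\<mu> = bind_pmf (geometric_pmf p) (edge_walk G)"
  have "stationary \<mu>"
    unfolding stationary_def \<mu>_def
    using stationary_geometric_edge_walk[OF assms(1,2)] set_pmf_edge_walk[OF assms(3)] by auto
  moreover have "\<nu> = \<mu>" if "stationary \<nu>" for \<nu>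
    using that \<open>stationary \<mu>\<close> stationary_pr_step_unique[OF assms] unfolding stationary_def by blast
  ultimately have "stationary (pagerank p G)"
    unfolding pagerank_def stationary_def[symmetric] by (rule theI)
  then show "set_pmf (pagerank p G) \<subseteq> {..<length G}"
    unfolding stationary_def by (rule conjunct1)
  from \<open>stationary (pagerank p G)\<close> show "bind_pmf (pagerank p G) (pr_step p G) = pagerank p G"
    unfolding stationary_def by (rule conjunct2)
qed

lemma expectation_uniform_vertex:
  "mgraph_wf G \<Longrightarrow> measure_pmf.expectation (pmf_of_set {..<length G}) f = (\<Sum>u<length G. f u) / length G"
  by (subst integral_pmf_of_set) (auto simp: mgraph_wf_def)

lemma finite_set_pmf_pr_step: "mgraph_wf G \<Longrightarrow> v < length G \<Longrightarrow> finite (set_pmf (pr_step p G v))"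
  by (auto simp: pr_step_eq set_pmf_uniform_vertex edge_step_def mgraph_wf_def)

lemma expectation_pr_step:
  fixes f :: "nat \<Rightarrow> real"
  assumes "mgraph_wf G" "v < length G" "0 \<le> p" "p \<le> 1"
  shows "measure_pmf.expectation (pr_step p G v) f
       = p * ((\<Sum>u<length G. f u) / length G) + (1 - p) * measure_pmf.expectation (edge_step G v) f"
proof -
  have "measure_pmf.expectation (pr_step p G v) f
      = measure_pmf.expectation (bernoulli_pmf p)
          (\<lambda>b. measure_pmf.expectation (if b then pmf_of_set {..<length G} else edge_step G v) f)"
    unfolding pr_step_eq using assms
    by (intro expectation_bind_pmf_finite) (auto simp: set_pmf_uniform_vertex mgraph_wf_def edge_step_def)
  also have "\<dots> = p * measure_pmf.expectation (pmf_of_set {..<length G}) f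
      + (1 - p) * measure_pmf.expectation (edge_step G v) f"
    using assms(3,4) by (simp add: mult.commute)
  finally show ?thesis
    using expectation_uniform_vertex[OF assms(1)] by simp
qed

text \<open>Stationarity gives \<open>E f \<le> p \<cdot> avg f + (1 - p) s \<cdot> E f\<close>.\<close>
lemma expectation_pagerank_le:
  fixes f :: "nat \<Rightarrow> real"
  assumes p: "0 < p" "p \<le> 1" and G: "mgraph_wf G" and s: "(1 - p) * s < 1"
    and edge: "\<And>u j. u < length G \<Longrightarrow> j \<in> set (G ! u) \<Longrightarrow> f j \<le> s * f u"
  shows "measure_pmf.expectation (pagerank p G) f
          \<le> p / (1 - (1 - p) * s) * ((\<Sum>v<length G. f v) / length G)"
proof -
  define A where "A = (\<Sum>v<length G. f v) / length G"
  define B where "B = measure_pmf.expectation (pagerank p G) f"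
  have supp: "set_pmf (pagerank p G) \<subseteq> {..<length G}"
    using set_pmf_pagerank[OF p G] .
  then have fin: "finite (set_pmf (pagerank p G))"
    using finite_subset by blast
  have "B = measure_pmf.expectation (bind_pmf (pagerank p G) (pr_step p G)) f"
    by (simp add: B_def bind_pagerank_pr_step[OF p G])
  also have "\<dots> = measure_pmf.expectation (pagerank p G) (\<lambda>v. measure_pmf.expectation (pr_step p G v) f)"
    using supp G by (intro expectation_bind_pmf_finite fin finite_set_pmf_pr_step) auto
  also have "\<dots> \<le> measure_pmf.expectation (pagerank p G) (\<lambda>v. p * A + ((1 - p) * s) * f v)"
  proof (intro integral_mono_AE integrable_measure_pmf_finite fin AE_pmfI)
    fix v assume "v \<in> set_pmf (pagerank p G)"
    then have v: "v < length G" using supp by auto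
    then have ne: "G ! v \<noteq> []" using G by (auto simp: mgraph_wf_def)
    have "measure_pmf.expectation (edge_step G v) f \<le> measure_pmf.expectation (edge_step G v) (\<lambda>_. s * f v)"
      using ne edge[OF v] by (intro integral_mono_AE integrable_measure_pmf_finite AE_pmfI)
        (auto simp: set_pmf_edge_step edge_step_def)
    then show "measure_pmf.expectation (pr_step p G v) f \<le> p * A + ((1 - p) * s) * f v"
      using p by (simp add: expectation_pr_step[OF G v] A_def mult_left_mono mult.assoc)
  qed
  also have "\<dots> = p * A + ((1 - p) * s) * B"
    by (simp add: B_def integrable_measure_pmf_finite[OF fin])
  finally have "B * (1 - (1 - p) * s) \<le> p * A" by (simp add: algebra_simps)
  then have "B \<le> p * A / (1 - (1 - p) * s)"
    using s by (simp add: pos_le_divide_eq)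
  then show ?thesis
    by (simp add: B_def A_def ac_simps)
qed

lemma set_pmf_head_dist:
  "0 < p \<Longrightarrow> p \<le> 1 \<Longrightarrow> mgraph_wf G \<Longrightarrow> set_pmf (head_dist p \<beta> G) \<subseteq> {..<length G}"
  unfolding head_dist_def using set_pmf_pagerank[of p G]
  by (auto simp: set_pmf_uniform_vertex split: if_splits)

text \<open>The uniform part of the head distribution is harmless since the PageRank bound
  exceeds the plain average when \<open>s \<ge> 1\<close>.\<close>
lemma expectation_head_dist_le:
  fixes f :: "nat \<Rightarrow> real"
  assumes p: "0 < p" "p \<le> 1" and \<beta>: "0 \<le> \<beta>" "\<beta> \<le> 1" and G: "mgraph_wf G"
    and f: "\<And>v. 0 \<le> f v" and s: "1 \<le> s" "(1 - p) * s < 1"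
    and edge: "\<And>u j. u < length G \<Longrightarrow> j \<in> set (G ! u) \<Longrightarrow> f j \<le> s * f u"
  shows "measure_pmf.expectation (head_dist p \<beta> G) f
          \<le> p / (1 - (1 - p) * s) * ((\<Sum>v<length G. f v) / length G)"
proof -
  define A where "A = (\<Sum>v<length G. f v) / length G"
  define r where "r = p / (1 - (1 - p) * s)"
  have "1 - (1 - p) * s \<le> p"
    using s p mult_left_mono[OF s(1), of "1 - p"] by (simp add: algebra_simps)
  then have "1 \<le> r"
    using s by (simp add: r_def le_divide_eq)
  moreover have "0 \<le> A"
    using f by (simp add: A_def sum_nonneg)
  ultimately have A_le: "A \<le> r * A"
    by (simp add: mult_le_cancel_right1)
  have fin: "finite (set_pmf (pagerank p G))"
    using set_pmf_pagerank[OF p G] finite_subset by blast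
  have "measure_pmf.expectation (head_dist p \<beta> G) f
      = measure_pmf.expectation (bernoulli_pmf \<beta>)
          (\<lambda>b. measure_pmf.expectation (if b then pmf_of_set {..<length G} else pagerank p G) f)"
    unfolding head_dist_def using fin G
    by (intro expectation_bind_pmf_finite) (auto simp: set_pmf_uniform_vertex)
  also have "\<dots> = \<beta> * A + (1 - \<beta>) * measure_pmf.expectation (pagerank p G) f"
    using \<beta> by (simp add: A_def expectation_uniform_vertex[OF G] mult.commute)
  also have "\<dots> \<le> \<beta> * (r * A) + (1 - \<beta>) * (r * A)"
    using \<beta> A_le expectation_pagerank_le[OF p G s(2) edge]
    by (intro add_mono mult_left_mono) (auto simp: r_def A_def)
  also have "\<dots> = r * A" by (simp add: algebra_simps)
  finally show ?thesis by (simp add: r_def A_def)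
qed

section \<open>Distances to the root\<close>

lemma relpow_mono_set:
  fixes R S :: "('a \<times> 'a) set"
  assumes "R \<subseteq> S"
  shows "(x, y) \<in> R ^^ n \<Longrightarrow> (x, y) \<in> S ^^ n"
proof (induction n arbitrary: y)
  case (Suc n)
  from Suc.prems obtain z where "(x, z) \<in> R ^^ n" "(z, y) \<in> R"
    by (rule relpow_Suc_E)
  then show ?case
    using assms by (intro relpow_Suc_I[OF Suc.IH]) auto
qed simp

lemma relpow_sym:
  assumes "sym R"
  shows "(x, y) \<in> R ^^ n \<Longrightarrow> (y, x) \<in> R ^^ n"
proof (induction n arbitrary: x)
  case (Suc n)
  from Suc.prems obtain z where "(x, z) \<in> R" "(z, y) \<in> R ^^ n"
    by (rule relpow_Suc_E2)
  then show ?case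
    by (intro relpow_Suc_I[OF Suc.IH symD[OF assms]])
qed simp

lemma sym_und_edges: "sym (und_edges G)"
  by (auto simp: und_edges_def intro: symI)

lemma und_edges_append_mono: "und_edges G \<subseteq> und_edges (G @ [hs])"
  unfolding und_edges_def by (auto simp: nth_append)

definition connected_to_root :: "mgraph \<Rightarrow> bool" where
  "connected_to_root G \<longleftrightarrow> (\<forall>v<length G. \<exists>k. (v, 0) \<in> und_edges G ^^ k)"

definition root_dist :: "mgraph \<Rightarrow> nat \<Rightarrow> nat" where
  "root_dist G v = (LEAST k. (v, 0) \<in> und_edges G ^^ k)"

lemma root_dist_path:
  assumes "connected_to_root G" and "v < length G"
  shows "(v, 0) \<in> und_edges G ^^ root_dist G v"
proof -
  obtain k where "(v, 0) \<in> und_edges G ^^ k"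
    using assms unfolding connected_to_root_def by blast
  then show ?thesis
    unfolding root_dist_def by (rule LeastI)
qed

lemma root_dist_le: "(v, 0) \<in> und_edges G ^^ k \<Longrightarrow> root_dist G v \<le> k"
  unfolding root_dist_def by (rule Least_le)

lemma root_dist_edge_le:
  "connected_to_root G \<Longrightarrow> u < length G \<Longrightarrow> (v, u) \<in> und_edges G \<Longrightarrow> root_dist G v \<le> Suc (root_dist G u)"
  by (intro root_dist_le relpow_Suc_I2[of _ u] root_dist_path)

lemma diameter_le_twice_root_dist:
  assumes G: "connected_to_root G" and L: "\<And>v. v < length G \<Longrightarrow> root_dist G v \<le> L"
  shows "diameter G \<le> enat (2 * L)"
  unfolding diameter_def
proof (intro SUP_least, clarify)
  fix u v assume uv: "u < length G" "v < length G"
  have "(u, v) \<in> und_edges G ^^ (root_dist G u + root_dist G v)"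
    using root_dist_path[OF G uv(1)] relpow_sym[OF sym_und_edges root_dist_path[OF G uv(2)]]
    by (rule relpow_trans)
  then have "und_dist G u v \<le> enat (root_dist G u + root_dist G v)"
    unfolding und_dist_def by (intro INF_lower) auto
  also have "\<dots> \<le> enat (2 * L)"
    using L[OF uv(1)] L[OF uv(2)] by simp
  finally show "und_dist G u v \<le> enat (2 * L)" .
qed

lemma root_dist_append_le:
  "connected_to_root G \<Longrightarrow> v < length G \<Longrightarrow> root_dist (G @ [hs]) v \<le> root_dist G v"
  by (intro root_dist_le relpow_mono_set[OF und_edges_append_mono] root_dist_path)

lemma root_path_new_vertex:
  assumes G: "connected_to_root G" and h: "h \<in> set hs" "h < length G"
  shows "(length G, 0) \<in> und_edges (G @ [hs]) ^^ Suc (root_dist G h)"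
proof (rule relpow_Suc_I2)
  show "(length G, h) \<in> und_edges (G @ [hs])"
    using h unfolding und_edges_def by auto
  show "(h, 0) \<in> und_edges (G @ [hs]) ^^ root_dist G h"
    by (rule relpow_mono_set[OF und_edges_append_mono root_dist_path[OF G h(2)]])
qed

lemma root_dist_new_vertex_le:
  "connected_to_root G \<Longrightarrow> h \<in> set hs \<Longrightarrow> h < length G
    \<Longrightarrow> root_dist (G @ [hs]) (length G) \<le> Suc (root_dist G h)"
  by (intro root_dist_le root_path_new_vertex)

lemma connected_to_root_append:
  assumes G: "connected_to_root G" and h: "h \<in> set hs" "h < length G"
  shows "connected_to_root (G @ [hs])"
  unfolding connected_to_root_def
proof (intro allI impI)
  fix v assume "v < length (G @ [hs])"
  then consider "v < length G" | "v = length G" by fastforce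
  then show "\<exists>k. (v, 0) \<in> und_edges (G @ [hs]) ^^ k"
  proof cases
    case 1
    then show ?thesis
      using relpow_mono_set[OF und_edges_append_mono root_dist_path[OF G]] by blast
  next
    case 2
    then show ?thesis using root_path_new_vertex[OF G h] by blast
  qed
qed

lemma map_pmf_hd_replicate_pmf: "0 < d \<Longrightarrow> map_pmf hd (replicate_pmf d X) = X"
  by (cases d) (simp_all add: map_bind_pmf map_return_pmf bind_return_pmf')

lemma finite_set_pmf_replicate_pmf: "finite (set_pmf X) \<Longrightarrow> finite (set_pmf (replicate_pmf d X))"
  unfolding set_replicate_pmf
  by (rule rev_finite_subset[OF finite_lists_length_eq[of "set_pmf X" d]]) (auto simp: in_lists_conv_set)

definition webgraph_inv :: "nat \<Rightarrow> mgraph \<Rightarrow> bool" where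
  "webgraph_inv k G \<longleftrightarrow> length G = Suc k \<and> mgraph_wf G \<and> connected_to_root G"

lemma set_pmf_replicate_head_dist:
  assumes "hs \<in> set_pmf (replicate_pmf d (head_dist p \<beta> G))" and "0 < p" "p \<le> 1" "mgraph_wf G"
  shows "length hs = d" and "set hs \<subseteq> {..<length G}"
  using assms set_pmf_head_dist[OF assms(2-4), of \<beta>]
  by (auto simp: set_replicate_pmf in_lists_conv_set)

lemma finite_set_pmf_replicate_head_dist:
  "0 < p \<Longrightarrow> p \<le> 1 \<Longrightarrow> mgraph_wf G \<Longrightarrow> finite (set_pmf (replicate_pmf d (head_dist p \<beta> G)))"
  by (intro finite_set_pmf_replicate_pmf finite_subset[OF set_pmf_head_dist]) auto

lemma webgraph_inv_append:
  assumes G: "webgraph_inv k G" and hs: "hs \<noteq> []" "set hs \<subseteq> {..<length G}"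
  shows "webgraph_inv (Suc k) (G @ [hs])"
proof -
  have wf: "mgraph_wf G" and conn: "connected_to_root G" and len: "length G = Suc k"
    using G by (auto simp: webgraph_inv_def)
  have "mgraph_wf (G @ [hs])"
    using wf hs unfolding mgraph_wf_def by (fastforce simp: nth_append less_Suc_eq)
  moreover have "connected_to_root (G @ [hs])"
    using hs(2) hd_in_set[OF hs(1)] by (intro connected_to_root_append[OF conn hd_in_set[OF hs(1)]]) blast
  ultimately show ?thesis
    using len by (simp add: webgraph_inv_def)
qed

lemma webgraph_inv_set_pmf_webgraph:
  assumes "0 < d" "0 < p" "p \<le> 1"
  shows "G \<in> set_pmf (webgraph d p \<beta> k) \<Longrightarrow> webgraph_inv k G"
proof (induction k arbitrary: G)
  case 0
  then show ?case
    using assms by (auto simp: webgraph_inv_def mgraph_wf_def connected_to_root_def intro: exI[of _ 0])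
next
  case (Suc k)
  then obtain G' hs where G': "G' \<in> set_pmf (webgraph d p \<beta> k)" and G: "G = G' @ [hs]"
    and hs: "hs \<in> set_pmf (replicate_pmf d (head_dist p \<beta> G'))"
    by auto
  have "mgraph_wf G'"
    using Suc.IH[OF G'] by (simp add: webgraph_inv_def)
  then show ?case
    unfolding G using Suc.IH[OF G'] set_pmf_replicate_head_dist[OF hs assms(2,3)] assms(1)
    by (intro webgraph_inv_append) auto
qed

lemma finite_set_pmf_webgraph:
  assumes "0 < d" "0 < p" "p \<le> 1"
  shows "finite (set_pmf (webgraph d p \<beta> k))"
proof (induction k)
  case (Suc k)
  have "finite (set_pmf (replicate_pmf d (head_dist p \<beta> G)))" if "G \<in> set_pmf (webgraph d p \<beta> k)" for G
    using webgraph_inv_set_pmf_webgraph[OF assms that] assms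
    by (intro finite_set_pmf_replicate_head_dist) (auto simp: webgraph_inv_def)
  with Suc show ?case by simp
qed simp

section \<open>The root potential\<close>

definition root_potential :: "real \<Rightarrow> mgraph \<Rightarrow> real" where
  "root_potential s G = (\<Sum>v<length G. s ^ root_dist G v)"

definition potential_rate :: "real \<Rightarrow> real \<Rightarrow> real" where
  "potential_rate p s = s * (p / (1 - (1 - p) * s))"

lemma potential_rate_nonneg: "0 \<le> p \<Longrightarrow> 0 \<le> s \<Longrightarrow> (1 - p) * s < 1 \<Longrightarrow> 0 \<le> potential_rate p s"
  by (simp add: potential_rate_def)

lemma root_potential_nonneg: "0 \<le> s \<Longrightarrow> 0 \<le> root_potential s G"
  unfolding root_potential_def by (intro sum_nonneg) auto

lemma root_potential_append_le:
  assumes s: "1 \<le> s" and G: "connected_to_root G" and h: "h \<in> set hs" "h < length G"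
  shows "root_potential s (G @ [hs]) \<le> root_potential s G + s * s ^ root_dist G h"
proof -
  have "root_potential s (G @ [hs])
      = (\<Sum>v<length G. s ^ root_dist (G @ [hs]) v) + s ^ root_dist (G @ [hs]) (length G)"
    by (simp add: root_potential_def)
  also have "\<dots> \<le> root_potential s G + s ^ Suc (root_dist G h)"
    unfolding root_potential_def using s
    by (intro add_mono sum_mono power_increasing root_dist_append_le root_dist_new_vertex_le G h) auto
  finally show ?thesis by simp
qed

text \<open>The increment is controlled by the first head \<open>h\<close>, and \<open>s ^ root_dist G\<close> grows by at
  most the factor \<open>s\<close> along edges, so the PageRank bound applies to \<open>s ^ root_dist G h\<close>.\<close>
lemma expectation_root_potential_append_le:
  assumes d: "0 < d" and p: "0 < p" "p \<le> 1" and \<beta>: "0 \<le> \<beta>" "\<beta> \<le> 1"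
    and s: "1 \<le> s" "(1 - p) * s < 1" and G: "webgraph_inv k G"
  shows "measure_pmf.expectation (replicate_pmf d (head_dist p \<beta> G)) (\<lambda>hs. root_potential s (G @ [hs]))
     \<le> (1 + potential_rate p s / Suc k) * root_potential s G"
proof -
  have wf: "mgraph_wf G" and conn: "connected_to_root G" and len: "length G = Suc k"
    using G by (auto simp: webgraph_inv_def)
  define R where "R = replicate_pmf d (head_dist p \<beta> G)"
  have fin: "finite (set_pmf R)"
    unfolding R_def by (rule finite_set_pmf_replicate_head_dist[OF p wf])
  have "measure_pmf.expectation R (\<lambda>hs. root_potential s (G @ [hs]))
      \<le> measure_pmf.expectation R (\<lambda>hs. root_potential s G + s * s ^ root_dist G (hd hs))"
  proof (intro integral_mono_AE integrable_measure_pmf_finite fin AE_pmfI)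
    fix hs assume "hs \<in> set_pmf R"
    note hs = set_pmf_replicate_head_dist[OF this[unfolded R_def] p wf]
    have "hd hs \<in> set hs" using hs(1) d by (intro hd_in_set) auto
    then show "root_potential s (G @ [hs]) \<le> root_potential s G + s * s ^ root_dist G (hd hs)"
      using hs(2) by (intro root_potential_append_le[OF s(1) conn]) auto
  qed
  also have "\<dots> = root_potential s G + s * measure_pmf.expectation (map_pmf hd R) (\<lambda>h. s ^ root_dist G h)"
    by (simp add: integrable_measure_pmf_finite[OF fin])
  also have "map_pmf hd R = head_dist p \<beta> G"
    unfolding R_def by (rule map_pmf_hd_replicate_pmf[OF d])
  also have "measure_pmf.expectation (head_dist p \<beta> G) (\<lambda>h. s ^ root_dist G h)
      \<le> p / (1 - (1 - p) * s) * (root_potential s G / length G)"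
    unfolding root_potential_def
  proof (rule expectation_head_dist_le[OF p \<beta> wf _ s])
    fix u j assume uj: "u < length G" "j \<in> set (G ! u)"
    then have "(j, u) \<in> und_edges G"
      using wf by (auto simp: und_edges_def mgraph_wf_def)
    then have "root_dist G j \<le> Suc (root_dist G u)"
      by (rule root_dist_edge_le[OF conn uj(1)])
    then show "s ^ root_dist G j \<le> s * s ^ root_dist G u"
      using s(1) by (metis power_Suc power_increasing)
  qed (use s in auto)
  finally have "measure_pmf.expectation R (\<lambda>hs. root_potential s (G @ [hs]))
      \<le> root_potential s G + s * (p / (1 - (1 - p) * s) * (root_potential s G / length G))"
    using s by (simp add: mult_left_mono)
  then show ?thesis
    by (simp add: R_def potential_rate_def len algebra_simps)
qed

lemma expectation_root_potential_webgraph_Suc: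
  assumes d: "0 < d" and p: "0 < p" "p \<le> 1" and \<beta>: "0 \<le> \<beta>" "\<beta> \<le> 1"
    and s: "1 \<le> s" "(1 - p) * s < 1"
  shows "measure_pmf.expectation (webgraph d p \<beta> (Suc k)) (root_potential s)
      \<le> (1 + potential_rate p s / Suc k) * measure_pmf.expectation (webgraph d p \<beta> k) (root_potential s)"
proof -
  note inv = webgraph_inv_set_pmf_webgraph[OF d p]
  note fin = finite_set_pmf_webgraph[OF d p]
  have wf: "mgraph_wf G" if "G \<in> set_pmf (webgraph d p \<beta> k)" for G
    using inv[OF that] by (simp add: webgraph_inv_def)
  have "measure_pmf.expectation (webgraph d p \<beta> (Suc k)) (root_potential s)
      = measure_pmf.expectation (webgraph d p \<beta> k)
          (\<lambda>G. measure_pmf.expectation (replicate_pmf d (head_dist p \<beta> G)) (\<lambda>hs. root_potential s (G @ [hs])))"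
    unfolding webgraph.simps
    by (subst expectation_bind_pmf_finite)
      (auto simp: fin finite_set_pmf_replicate_head_dist[OF p wf])
  also have "\<dots> \<le> measure_pmf.expectation (webgraph d p \<beta> k)
      (\<lambda>G. (1 + potential_rate p s / Suc k) * root_potential s G)"
    by (intro integral_mono_AE integrable_measure_pmf_finite fin AE_pmfI
        expectation_root_potential_append_le[OF d p \<beta> s] inv)
  also have "\<dots> = (1 + potential_rate p s / Suc k) * measure_pmf.expectation (webgraph d p \<beta> k) (root_potential s)"
    by simp
  finally show ?thesis .
qed

lemma ln_succ_diff_ge: "0 < x \<Longrightarrow> 1 / (x + 1) \<le> ln (x + 1) - ln (x :: real)"
  using ln_le_minus_one[of "x / (x + 1)"] by (simp add: ln_div field_simps)

lemma powr_succ_ge: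
  fixes x c :: real
  assumes "0 < x" "0 \<le> c"
  shows "(1 + c / (x + 1)) * x powr c \<le> (x + 1) powr c"
proof -
  have "1 + c / (x + 1) \<le> exp (c / (x + 1))"
    by (rule exp_ge_add_one_self)
  also have "\<dots> \<le> exp (c * (ln (x + 1) - ln x))"
    using ln_succ_diff_ge[OF assms(1)] assms(2) by (simp add: mult_left_mono divide_inverse)
  also have "\<dots> = (x + 1) powr c / x powr c"
    using assms(1) by (simp add: powr_def exp_diff algebra_simps)
  finally show ?thesis
    using assms(1) by (simp add: pos_le_divide_eq)
qed

lemma expectation_root_potential_webgraph_le:
  assumes d: "0 < d" and p: "0 < p" "p \<le> 1" and \<beta>: "0 \<le> \<beta>" "\<beta> \<le> 1"
    and s: "1 \<le> s" "(1 - p) * s < 1" and k: "1 \<le> k"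
  defines "c \<equiv> potential_rate p s"
  shows "measure_pmf.expectation (webgraph d p \<beta> k) (root_potential s) \<le> (1 + c) * real k powr c"
  using k
proof (induction k rule: dec_induct)
  case base
  have "root_dist [replicate d 0] 0 = 0"
    by (intro le_0_eq[THEN iffD1] root_dist_le) simp
  then have "root_potential s [replicate d 0] = 1"
    by (simp add: root_potential_def)
  then show ?case
    using expectation_root_potential_webgraph_Suc[OF d p \<beta> s, of 0]
    by (simp add: c_def del: webgraph.simps(2))
next
  case (step k)
  have c: "0 \<le> c"
    unfolding c_def using s p by (intro potential_rate_nonneg) auto
  have "measure_pmf.expectation (webgraph d p \<beta> (Suc k)) (root_potential s)
      \<le> (1 + c / (real k + 1)) * measure_pmf.expectation (webgraph d p \<beta> k) (root_potential s)"
    using expectation_root_potential_webgraph_Suc[OF d p \<beta> s, of k]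
    by (simp add: c_def add.commute del: webgraph.simps(2))
  also have "\<dots> \<le> (1 + c / (real k + 1)) * ((1 + c) * real k powr c)"
    using step.IH c by (intro mult_left_mono) auto
  also have "\<dots> = (1 + c) * ((1 + c / (real k + 1)) * real k powr c)"
    by simp
  also have "\<dots> \<le> (1 + c) * (real k + 1) powr c"
    using powr_succ_ge[of "real k" c] step.hyps c by (intro mult_left_mono) auto
  finally show ?case by (simp add: add.commute)
qed

section \<open>Diameter bound\<close>

lemma diameter_le_of_root_potential_less:
  assumes G: "connected_to_root G" and s: "1 < s" and pot: "root_potential s G < s ^ Suc L"
  shows "diameter G \<le> enat (2 * L)"
proof (rule diameter_le_twice_root_dist[OF G])
  fix v assume "v < length G"
  then have "s ^ root_dist G v \<le> root_potential s G"
    unfolding root_potential_def using s by (intro member_le_sum) auto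
  then have "root_dist G v < Suc L"
    using pot by (intro power_less_imp_less_exp[OF s]) simp
  then show "root_dist G v \<le> L" by simp
qed

text \<open>Markov's inequality for the root potential.\<close>
lemma prob_webgraph_model_diameter_ge:
  assumes d: "0 < d" and p: "0 < p" "p \<le> 1" and \<beta>: "0 \<le> \<beta>" "\<beta> \<le> 1"
    and s: "1 < s" "(1 - p) * s < 1" and n: "2 \<le> n" and D: "2 * L \<le> D"
  defines "c \<equiv> potential_rate p s"
  shows "1 - (1 + c) * real n powr c / s ^ Suc L
      \<le> measure_pmf.prob (webgraph_model d p \<beta> n) {G. diameter G \<le> enat D}"
proof -
  define M where "M = webgraph_model d p \<beta> n"
  define t where "t = s ^ Suc L"
  have t: "0 < t" using s by (simp add: t_def)
  have inv: "webgraph_inv (n - 1) G" if "G \<in> set_pmf M" for G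
    using webgraph_inv_set_pmf_webgraph[OF d p] that by (simp add: M_def webgraph_model_def)
  have fin: "finite (set_pmf M)"
    using finite_set_pmf_webgraph[OF d p] by (simp add: M_def webgraph_model_def)
  have c: "0 \<le> c"
    unfolding c_def using s p by (intro potential_rate_nonneg) auto
  have "measure_pmf.expectation M (root_potential s) \<le> (1 + c) * real (n - 1) powr c"
    unfolding M_def webgraph_model_def c_def
    using n s by (intro expectation_root_potential_webgraph_le[OF d p \<beta>]) auto
  also have "\<dots> \<le> (1 + c) * real n powr c"
    using c n by (intro mult_left_mono powr_mono2) auto
  finally have E: "measure_pmf.expectation M (root_potential s) / t \<le> (1 + c) * real n powr c / t"
    using t by (simp add: divide_right_mono)
  have markov: "measure_pmf.prob M {G. t \<le> root_potential s G} \<le> measure_pmf.expectation M (root_potential s) / t"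
    using integral_Markov_inequality_measure[of M "root_potential s" UNIV t] t s
    by (simp add: integrable_measure_pmf_finite[OF fin] root_potential_nonneg)
  have "1 - measure_pmf.prob M {G. t \<le> root_potential s G} = measure_pmf.prob M {G. root_potential s G < t}"
    using measure_pmf.prob_compl[of "{G. t \<le> root_potential s G}" M]
    by (simp add: Compl_eq_Diff_UNIV[symmetric] Collect_neg_eq[symmetric] not_le)
  also have "\<dots> = measure_pmf.prob M ({G. root_potential s G < t} \<inter> set_pmf M)"
    by (simp add: measure_Int_set_pmf)
  also have "\<dots> \<le> measure_pmf.prob M {G. diameter G \<le> enat D}"
  proof (intro measure_pmf.finite_measure_mono subsetI, clarsimp)
    fix G assume "root_potential s G < t" "G \<in> set_pmf M"
    then have "diameter G \<le> enat (2 * L)"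
      using inv s by (intro diameter_le_of_root_potential_less) (auto simp: t_def webgraph_inv_def)
    then show "diameter G \<le> enat D"
      using D by (simp add: order.trans)
  qed simp
  finally show ?thesis
    using markov E by (simp add: M_def t_def)
qed

lemma tendsto_powr_div_power_floor_ln:
  fixes s K c :: real
  assumes s: "1 < s" and gap: "c < K * ln s"
  shows "(\<lambda>n. real n powr c / s ^ Suc (nat \<lfloor>K * ln (real n)\<rfloor>)) \<longlonglongrightarrow> 0"
proof (rule tendsto_sandwich[of "\<lambda>_. 0" _ _ "\<lambda>n. real n powr (c - K * ln s)"])
  have "real n powr c / s ^ Suc (nat \<lfloor>K * ln (real n)\<rfloor>) \<le> real n powr (c - K * ln s)"
    if "1 \<le> n" for n
  proof -
    have "K * ln (real n) \<le> real (Suc (nat \<lfloor>K * ln (real n)\<rfloor>))"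
      by linarith
    then have "s powr (K * ln (real n)) \<le> s powr real (Suc (nat \<lfloor>K * ln (real n)\<rfloor>))"
      using s by (intro powr_mono) auto
    also have "\<dots> = s ^ Suc (nat \<lfloor>K * ln (real n)\<rfloor>)"
      using s by (intro powr_realpow) auto
    finally have "s powr (K * ln (real n)) \<le> s ^ Suc (nat \<lfloor>K * ln (real n)\<rfloor>)" .
    moreover have "s powr (K * ln (real n)) = real n powr (K * ln s)"
      using s that by (simp add: powr_def mult_ac)
    ultimately show ?thesis
      using s that by (simp add: powr_diff divide_left_mono)
  qed
  then show "\<forall>\<^sub>F n in sequentially. real n powr c / s ^ Suc (nat \<lfloor>K * ln (real n)\<rfloor>) \<le> real n powr (c - K * ln s)"
    by (intro eventually_sequentiallyI)
  show "(\<lambda>n. real n powr (c - K * ln s)) \<longlonglongrightarrow> 0"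
    using gap by (intro tendsto_neg_powr filterlim_real_sequentially) simp
qed (use s in auto)

lemma potential_rate_half_step:
  fixes p :: real
  assumes "0 < p"
  shows "(1 - p) * (1 + p / 2) < 1" and "potential_rate p (1 + p / 2) = (2 + p) / (1 + p)"
proof -
  have den: "1 - (1 - p) * (1 + p / 2) = p * (1 + p) / 2"
    by (simp add: field_simps)
  moreover have "0 < p * (1 + p) / 2"
    using assms by simp
  ultimately show "(1 - p) * (1 + p / 2) < 1"
    by linarith
  have "p / (p * (1 + p) / 2) = 2 / (1 + p)"
    using assms by (simp add: divide_simps)
  then show "potential_rate p (1 + p / 2) = (2 + p) / (1 + p)"
    unfolding potential_rate_def den using assms by (simp add: divide_simps) (simp add: algebra_simps)
qed

lemma ln_one_plus_half_ge: "0 < p \<Longrightarrow> p / (2 + p) \<le> ln (1 + p / (2 :: real))"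
  using ln_le_minus_one[of "1 / (1 + p / 2)"] by (simp add: ln_div field_simps)

lemma potential_rate_half_step_less:
  assumes p: "0 < p"
  shows "potential_rate p (1 + p / 2) < 4 * exp p / p * ln (1 + p / 2)"
proof -
  have "(2 + p) * (2 + p) < 4 * (1 + p) * (1 + p)"
    using p by (simp add: algebra_simps add_pos_nonneg)
  also have "\<dots> \<le> 4 * exp p * (1 + p)"
    using p exp_ge_add_one_self[of p] by (intro mult_right_mono mult_left_mono) auto
  finally have "(2 + p) * (2 + p) < 4 * exp p * (1 + p)" .
  then have "(2 + p) / (1 + p) < 4 * exp p / (2 + p)"
    using p by (simp add: field_simps)
  also have "\<dots> = 4 * exp p / p * (p / (2 + p))"
    using p by simp
  also have "\<dots> \<le> 4 * exp p / p * ln (1 + p / 2)"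
    using p ln_one_plus_half_ge[OF p] by (intro mult_left_mono) auto
  finally show ?thesis
    using potential_rate_half_step(2)[OF p] by simp
qed

lemma twice_nat_floor_le: "0 \<le> (x::real) \<Longrightarrow> 2 * nat \<lfloor>x\<rfloor> \<le> nat \<lfloor>2 * x\<rfloor>"
  by linarith

theorem theorem5:
  fixes d :: nat and p \<beta> :: real
  assumes "d > 0" and "0 < p" and "p \<le> 1" and "0 < \<beta>" and "\<beta> \<le> 1"
  shows "(\<lambda>n. measure_pmf.prob (webgraph_model d p \<beta> n)
            {G. diameter G \<le> enat (nat \<lfloor>8 * exp p * ln (real n) / p\<rfloor>)})
         \<longlonglongrightarrow> 1"
proof -
  define s where "s = 1 + p / 2"
  define c where "c = potential_rate p s"
  define K where "K = 4 * exp p / p"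
  define L where "L n = nat \<lfloor>K * ln (real n)\<rfloor>" for n :: nat
  have s: "1 < s" "(1 - p) * s < 1"
    using assms potential_rate_half_step(1) by (auto simp: s_def)
  have floor: "2 * L n \<le> nat \<lfloor>8 * exp p * ln (real n) / p\<rfloor>" if "1 \<le> n" for n
  proof -
    have "2 * L n \<le> nat \<lfloor>2 * (K * ln (real n))\<rfloor>"
      unfolding L_def using that assms(2) by (intro twice_nat_floor_le) (simp add: K_def)
    also have "2 * (K * ln (real n)) = 8 * exp p * ln (real n) / p"
      by (simp add: K_def)
    finally show ?thesis .
  qed
  have lower: "\<forall>\<^sub>F n in sequentially. 1 - (1 + c) * (real n powr c / s ^ Suc (L n))
      \<le> measure_pmf.prob (webgraph_model d p \<beta> n)
           {G. diameter G \<le> enat (nat \<lfloor>8 * exp p * ln (real n) / p\<rfloor>)}"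
    using prob_webgraph_model_diameter_ge[OF assms(1-3) _ assms(5) s _ floor] assms(4)
    by (intro eventually_sequentiallyI[of 2]) (simp add: c_def)
  have gap: "c < K * ln s"
    using potential_rate_half_step_less[OF assms(2)] by (simp add: c_def K_def s_def)
  have "(\<lambda>n. 1 - (1 + c) * (real n powr c / s ^ Suc (L n))) \<longlonglongrightarrow> 1 - (1 + c) * 0"
    unfolding L_def by (intro tendsto_intros tendsto_powr_div_power_floor_ln s(1) gap)
  then have lim: "(\<lambda>n. 1 - (1 + c) * (real n powr c / s ^ Suc (L n))) \<longlonglongrightarrow> 1"
    by simp
  show ?thesis
    by (rule tendsto_sandwich[OF lower _ lim tendsto_const]) simp
qed

end
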